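(* Let $m\ge 3$. For every $\epsilon>0$ there exists $\delta>0$ such that if $f(z)=z^{m}+\sum_{k=0}^{m-1}a_kz^k$ satisfies the $\delta$-condition and $\Omega(f)$ is simply connected, then $|a_{0}|<2^{\frac{1}{m-1}}+\epsilon$.
   Context: A monic polynomial $f(z)=z^{m}+\sum_{k=0}^{m-1}a_{k}z^{k}$ satisfies the $\delta$-condition if $|a_{k}|<\delta$ for all $1\le k\le m-1$ (no condition on $a_0$). $\Omega(f)=\{z\in\hat{\mathbb{C}}: f^{n}(z)\to\infty \text{ as } n\to+\infty\}$, where $f^n$ is the $n$-th iterate. *)

theory Defs
  imports "HOL-Analysis.Analysis"
begin

definition monic_poly :: "nat \<Rightarrow> (nat \<Rightarrow> complex) \<Rightarrow> complex \<Rightarrow> complex" where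
  "monic_poly m a z = z ^ m + (\<Sum>k<m. a k * z ^ k)"

definition delta_condition :: "nat \<Rightarrow> real \<Rightarrow> (nat \<Rightarrow> complex) \<Rightarrow> bool" where
  "delta_condition m \<delta> a \<longleftrightarrow> (\<forall>k. 1 \<le> k \<and> k \<le> m - 1 \<longrightarrow> norm (a k) < \<delta>)"

text \<open>Riemann sphere modelled as the unit sphere in complex x real (= R^3);
  stereographic embedding of the finite plane; infinity is the north pole (0,1).\<close>
definition stereo :: "complex \<Rightarrow> complex \<times> real" where
  "stereo z = (of_real (2 / (1 + (norm z)\<^sup>2)) * z, ((norm z)\<^sup>2 - 1) / ((norm z)\<^sup>2 + 1))"

definition north_pole :: "complex \<times> real" where
  "north_pole = (0, 1)"

definition escaping_set :: "(complex \<Rightarrow> complex) \<Rightarrow> complex set" where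
  "escaping_set f = {z. filterlim (\<lambda>n. (f ^^ n) z) at_infinity sequentially}"

text \<open>Omega(f) as a subset of the Riemann sphere (infinity is fixed by a polynomial,
  so it belongs to Omega(f)).\<close>
definition Omega :: "(complex \<Rightarrow> complex) \<Rightarrow> (complex \<times> real) set" where
  "Omega f = insert north_pole (stereo ` escaping_set f)"

end

(*
  Suppose |a_0| >= 2^(1/(m-1)) + epsilon while the other coefficients are delta-small, so that f
  is a small perturbation of z^m + c with c = a_0. Put theta = pi/m, let beta be an m-th root of
  -c/|c| and R = |c|/cos theta. On the sides of the triangle with vertices 0 and
  beta R e^(+-i theta), either z^m is a nonnegative multiple of c, so that |f z| is about
  |z|^m + |c|, or |z| >= |c|. Beyond |c| minus a small margin f expands by a fixed factor, so the
  boundary of the triangle lies in the escaping set. Brouwer's theorem, applied to branches of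
  z |-> (z + z^m - f z)^(1/m), gives a fixed point q inside the triangle near the ray through
  beta, and a fixed point p outside it near the ray through beta e^(2 i theta); fixed points do
  not escape. If Omega(f) were simply connected, the boundary loop would be contractible in
  Omega(f). The map z |-> (z - q)/(z - p) extends continuously to infinity and has no zero on
  Omega(f), so the image loop is null-homotopic in C - {0}; since p lies outside the convex
  triangle, a linear homotopy turns this into winding number 0 of the boundary around q,
  contradicting that q lies inside the triangle.
*)

theory Submission
  imports Defs "HOL-Complex_Analysis.Complex_Analysis"
begin

section \<open>Escaping points\<close>

lemma escaping_set_preimage:
  assumes "f z \<in> escaping_set f"
  shows "z \<in> escaping_set f"
proof -
  have "(f ^^ Suc n) z = (f ^^ n) (f z)" for n
    by (simp add: funpow_Suc_right del: funpow.simps)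
  then show ?thesis
    using assms filterlim_sequentially_Suc[of "\<lambda>n. (f ^^ n) z"] by (simp add: escaping_set_def)
qed

lemma fixed_point_not_in_escaping_set: "f q = q \<Longrightarrow> q \<notin> escaping_set f"
proof
  assume "f q = q" "q \<in> escaping_set f"
  moreover have "(f ^^ n) q = q" if "f q = q" for n
    using that by (induction n) simp_all
  ultimately have "filterlim (\<lambda>n. q) at_infinity sequentially"
    by (simp add: escaping_set_def)
  then have "\<forall>r>0. r \<le> norm q"
    by (simp add: filterlim_at_infinity[OF order_refl])
  from this[rule_format, of "norm q + 1"] show False
    by (smt (verit) norm_ge_zero)
qed

lemma escaping_set_if_expanding:
  fixes f :: "complex \<Rightarrow> complex"
  assumes "1 < k" "0 < r" "r \<le> norm z"
    and expand: "\<And>w. r \<le> norm w \<Longrightarrow> k * norm w \<le> norm (f w)"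
  shows "z \<in> escaping_set f"
proof -
  have orbit: "norm z * k ^ n \<le> norm ((f ^^ n) z)" for n
  proof (induction n)
    case (Suc n)
    have "r \<le> norm z * k ^ n"
      using assms(1,3) one_le_power[of k n] mult_left_mono[of 1 "k ^ n" "norm z"] by auto
    then have "k * norm ((f ^^ n) z) \<le> norm ((f ^^ Suc n) z)"
      using Suc expand by simp
    moreover have "k * (norm z * k ^ n) \<le> k * norm ((f ^^ n) z)"
      using Suc assms(1) by simp
    ultimately show ?case
      by (simp add: algebra_simps)
  qed simp
  have "filterlim (\<lambda>n. k ^ n) at_top sequentially"
    using filterlim_realpow_sequentially_gt1[of k] assms(1)
    by (simp add: filterlim_at_infinity_conv_norm_at_top)
  then have "filterlim (\<lambda>n. norm z * k ^ n) at_top sequentially"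
    using assms(2,3) by (intro filterlim_tendsto_pos_mult_at_top[OF tendsto_const]) auto
  then have "filterlim (\<lambda>n. norm ((f ^^ n) z)) at_top sequentially"
    by (rule filterlim_at_top_mono) (use orbit in auto)
  then show ?thesis
    by (simp add: escaping_set_def filterlim_at_infinity_conv_norm_at_top)
qed

section \<open>Fixed points from Brouwer's theorem\<close>

lemma exp_Ln_div_power:
  assumes "w \<noteq> 0" "0 < m"
  shows "exp (Ln w / of_nat m) ^ m = w"
  using assms by (simp flip: exp_of_nat_mult)

lemma brouwer_power_equation_in_sector:
  fixes v :: "complex \<Rightarrow> complex"
  assumes "0 < \<rho>" "0 < m" "norm \<beta> = 1" "continuous_on (cball 0 \<rho>) v"
    and Re_pos: "\<And>z. norm z \<le> \<rho> \<Longrightarrow> 0 < Re (v z)"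
    and norm_le: "\<And>z. norm z \<le> \<rho> \<Longrightarrow> norm (v z) \<le> \<rho> ^ m"
  shows "\<exists>q l \<phi>. norm q \<le> \<rho> \<and> q ^ m = \<beta> ^ m * v q \<and> 0 < l \<and> \<bar>\<phi>\<bar> < pi / (2 * m)
           \<and> q = \<beta> * rcis l \<phi>"
proof -
  define \<Phi> where "\<Phi> z = \<beta> * exp (Ln (v z) / of_nat m)" for z
  have v_nonzero: "v z \<noteq> 0" if "norm z \<le> \<rho>" for z
    using Re_pos[OF that] by auto
  have "continuous_on (cball 0 \<rho>) \<Phi>"
    unfolding \<Phi>_def
  proof (intro continuous_intros continuous_on_Ln)
    show "continuous_on (cball 0 \<rho>) v" by fact
    show "v z \<notin> \<real>\<^sub>\<le>\<^sub>0" if "z \<in> cball 0 \<rho>" for z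
      using Re_pos[of z] that by (auto simp: complex_nonpos_Reals_iff)
  qed (use assms(2) in auto)
  moreover have "\<Phi> \<in> cball 0 \<rho> \<rightarrow> cball 0 \<rho>"
  proof
    fix z :: complex assume "z \<in> cball 0 \<rho>"
    then have z: "norm z \<le> \<rho>"
      by simp
    have "norm (\<Phi> z) ^ m = norm (exp (Ln (v z) / of_nat m) ^ m)"
      by (simp only: \<Phi>_def norm_mult assms(3) mult_1 norm_power)
    also have "\<dots> \<le> \<rho> ^ m"
      using norm_le[OF z] exp_Ln_div_power[OF v_nonzero[OF z] assms(2)] by simp
    finally have "norm (\<Phi> z) ^ m \<le> \<rho> ^ m" .
    then have "norm (\<Phi> z) ^ Suc (m - 1) \<le> \<rho> ^ Suc (m - 1)"
      using assms(2) by simp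
    then have "norm (\<Phi> z) \<le> \<rho>"
      by (rule power_le_imp_le_base) (use assms(1) in simp)
    then show "\<Phi> z \<in> cball 0 \<rho>"
      by simp
  qed
  ultimately obtain q where q: "norm q \<le> \<rho>" "\<Phi> q = q"
    using brouwer_ball[OF assms(1)] by (metis mem_cball_0)
  define L where "L = Ln (v q)"
  have "q ^ m = \<beta> ^ m * v q"
    using q exp_Ln_div_power[OF v_nonzero assms(2)] by (metis \<Phi>_def power_mult_distrib)
  moreover have "\<bar>Im L\<bar> < pi / 2"
    unfolding L_def using Re_pos q(1) by (intro Re_Ln_pos_lt_imp)
  then have "\<bar>Im L / m\<bar> < pi / (2 * m)"
    using assms(2) by (simp add: divide_strict_right_mono field_simps)
  moreover have "q = \<beta> * rcis (exp (Re L / m)) (Im L / m)"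
    using q(2) by (simp add: \<Phi>_def L_def exp_eq_polar rcis_def)
  ultimately show ?thesis
    using q(1) by (intro exI[of _ q] exI[of _ "exp (Re L / m)"] exI[of _ "Im L / m"]) simp
qed

section \<open>A triangle with a vertex at the origin\<close>

lemma barycentric_rcis:
  assumes "sin (2 * \<theta>) \<noteq> 0" "R \<noteq> 0"
  shows "(l * sin (\<theta> - \<phi>) / (R * sin (2 * \<theta>))) *\<^sub>R (\<beta> * rcis R (- \<theta>))
           + (l * sin (\<theta> + \<phi>) / (R * sin (2 * \<theta>))) *\<^sub>R (\<beta> * rcis R \<theta>) = \<beta> * rcis l \<phi>"
proof -
  have ident: "complex_of_real (sin (\<theta> - \<phi>)) * cis (- \<theta>) + complex_of_real (sin (\<theta> + \<phi>)) * cis \<theta>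
      = complex_of_real (sin (2 * \<theta>)) * cis \<phi>"
    unfolding sin_double[of \<theta>]
    by (simp add: complex_eq_iff sin_add sin_diff cos_add cos_diff algebra_simps)
  have "(l * sin (\<theta> - \<phi>) / (R * sin (2 * \<theta>))) *\<^sub>R (\<beta> * rcis R (- \<theta>))
      + (l * sin (\<theta> + \<phi>) / (R * sin (2 * \<theta>))) *\<^sub>R (\<beta> * rcis R \<theta>)
      = \<beta> * (of_real (l / sin (2 * \<theta>)) *
          (of_real (sin (\<theta> - \<phi>)) * cis (- \<theta>) + of_real (sin (\<theta> + \<phi>)) * cis \<theta>))"
    using assms(2) by (simp add: rcis_def scaleR_conv_of_real algebra_simps)
  also have "\<dots> = \<beta> * rcis l \<phi>"
    using assms(1) by (simp add: ident rcis_def)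
  finally show ?thesis .
qed

lemma not_collinear_triangle:
  assumes "norm \<beta> = 1" "0 < R" "0 < sin (2 * \<theta>)"
  shows "\<not> collinear {0, \<beta> * rcis R (- \<theta>), \<beta> * rcis R \<theta>}"
proof
  assume "collinear {0, \<beta> * rcis R (- \<theta>), \<beta> * rcis R \<theta>}"
  then have "(\<beta> * rcis R \<theta>) / (\<beta> * rcis R (- \<theta>)) \<in> \<real>"
    by (simp add: collinear_iff_Reals)
  moreover have "(\<beta> * rcis R \<theta>) / (\<beta> * rcis R (- \<theta>)) = cis (2 * \<theta>)"
    using assms(1,2) by (auto simp: rcis_def cis_divide simp flip: mult_2)
  ultimately show False
    using assms(3) by (simp add: complex_is_Real_iff)
qed

lemma rcis_in_interior_triangle:
  assumes \<theta>: "0 < \<theta>" "\<theta> < pi / 2" and "norm \<beta> = 1" "0 < l" "\<bar>\<phi>\<bar> < \<theta>"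
    and below_chord: "l * cos \<phi> < R * cos \<theta>"
  shows "\<beta> * rcis l \<phi> \<in> interior (convex hull {0, \<beta> * rcis R (- \<theta>), \<beta> * rcis R \<theta>})"
proof -
  have "0 < cos \<phi>" "0 < cos \<theta>"
    using assms by (auto intro!: cos_gt_zero_pi)
  then have "0 < R"
    using \<open>0 < l\<close> below_chord by (smt (verit) mult_pos_pos mult_nonpos_nonneg)
  have "0 < sin \<theta>" "0 < sin (2 * \<theta>)" "0 < sin (\<theta> - \<phi>)" "0 < sin (\<theta> + \<phi>)"
    using assms by (auto intro!: sin_gt_zero)
  define v where "v = l * sin (\<theta> - \<phi>) / (R * sin (2 * \<theta>))"
  define w where "w = l * sin (\<theta> + \<phi>) / (R * sin (2 * \<theta>))"
  have "0 < v" "0 < w"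
    using \<open>0 < R\<close> \<open>0 < l\<close> \<open>0 < sin (2 * \<theta>)\<close> \<open>0 < sin (\<theta> - \<phi>)\<close> \<open>0 < sin (\<theta> + \<phi>)\<close>
    by (simp_all add: v_def w_def)
  have "v + w = (l * cos \<phi>) / (R * cos \<theta>)"
    using \<open>0 < R\<close> \<open>0 < sin \<theta>\<close> \<open>0 < cos \<theta>\<close>
    unfolding v_def w_def sin_double by (simp add: sin_add sin_diff field_simps)
  then have "v + w < 1"
    using below_chord \<open>0 < R\<close> \<open>0 < cos \<theta>\<close> by simp
  moreover have "v *\<^sub>R (\<beta> * rcis R (- \<theta>)) + w *\<^sub>R (\<beta> * rcis R \<theta>) = \<beta> * rcis l \<phi>"
    unfolding v_def w_def using \<open>0 < R\<close> \<open>0 < sin (2 * \<theta>)\<close> by (intro barycentric_rcis) auto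
  moreover note not_collinear_triangle[OF \<open>norm \<beta> = 1\<close> \<open>0 < R\<close> \<open>0 < sin (2 * \<theta>)\<close>]
  ultimately show ?thesis
    using \<open>0 < v\<close> \<open>0 < w\<close>
    unfolding interior_convex_hull_3_minimal[OF \<open>\<not> collinear _\<close> DIM_complex]
    by (intro CollectI exI[of _ "1 - v - w"] exI[of _ v] exI[of _ w]) auto
qed

lemma rcis_not_in_triangle:
  assumes \<theta>: "0 < \<theta>" "\<theta> \<le> pi / 2" and "norm \<beta> = 1" "0 \<le> R" "0 < l"
    and \<psi>: "\<theta> < \<psi>" "\<psi> < \<theta> + pi"
  shows "\<beta> * rcis l \<psi> \<notin> convex hull {0, \<beta> * rcis R (- \<theta>), \<beta> * rcis R \<theta>}"
proof
  assume "\<beta> * rcis l \<psi> \<in> convex hull {0, \<beta> * rcis R (- \<theta>), \<beta> * rcis R \<theta>}"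
  then obtain u v w :: real where "0 \<le> v" and
    "\<beta> * rcis l \<psi> = u *\<^sub>R 0 + v *\<^sub>R (\<beta> * rcis R (- \<theta>)) + w *\<^sub>R (\<beta> * rcis R \<theta>)"
    unfolding convex_hull_3 by blast
  then have "\<beta> * rcis l \<psi> = \<beta> * (rcis (R * v) (- \<theta>) + rcis (R * w) \<theta>)"
    by (simp add: scaleR_conv_of_real rcis_def algebra_simps)
  then have "rcis l \<psi> = rcis (R * v) (- \<theta>) + rcis (R * w) \<theta>"
    using \<open>norm \<beta> = 1\<close> by auto
  \<comment> \<open>rotated by -\<theta>, the triangle lies in the closed lower half-plane, the point in the open upper one\<close>
  then have "Im (cis (- \<theta>) * rcis l \<psi>) = Im (cis (- \<theta>) * (rcis (R * v) (- \<theta>) + rcis (R * w) \<theta>))"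
    by simp
  then have "l * sin (\<psi> - \<theta>) = - (R * v * sin (2 * \<theta>))"
    by (simp add: rcis_def cis_mult distrib_left algebra_simps sin_diff)
  moreover have "0 < sin (\<psi> - \<theta>)" "0 \<le> sin (2 * \<theta>)"
    using assms by (auto intro!: sin_gt_zero sin_ge_zero)
  then have "0 < l * sin (\<psi> - \<theta>)" "0 \<le> R * v * sin (2 * \<theta>)"
    using assms \<open>0 \<le> v\<close> by simp_all
  ultimately show False
    by linarith
qed

lemma power_in_closed_segment_0:
  assumes "z \<in> closed_segment 0 w"
  shows "\<exists>t\<ge>0. z ^ n = complex_of_real t * w ^ n"
proof -
  obtain u :: real where "0 \<le> u" "z = u *\<^sub>R w"
    using assms unfolding closed_segment_def by auto
  then show ?thesis
    by (intro exI[of _ "u ^ n"]) (simp add: scaleR_conv_of_real power_mult_distrib)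
qed

lemma norm_ge_on_chord:
  assumes "norm \<beta> = 1" "0 \<le> R"
    and "z \<in> closed_segment (\<beta> * rcis R (- \<theta>)) (\<beta> * rcis R \<theta>)"
  shows "R * cos \<theta> \<le> norm z"
proof -
  obtain u :: real where
    z: "z = (1 - u) *\<^sub>R (\<beta> * rcis R (- \<theta>)) + u *\<^sub>R (\<beta> * rcis R \<theta>)"
    using assms(3) unfolding closed_segment_def by auto
  have "z = \<beta> * of_real R * (of_real (1 - u) * cis (- \<theta>) + of_real u * cis \<theta>)"
    unfolding z by (simp add: scaleR_conv_of_real rcis_def algebra_simps)
  then have "norm z = R * norm (of_real (1 - u) * cis (- \<theta>) + of_real u * cis \<theta>)"
    using assms(1,2) by (simp add: norm_mult)
  moreover have "cos \<theta> \<le> norm (of_real (1 - u) * cis (- \<theta>) + of_real u * cis \<theta>)"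
    using complex_Re_le_cmod[of "of_real (1 - u) * cis (- \<theta>) + of_real u * cis \<theta>"]
    by (simp add: algebra_simps)
  ultimately show ?thesis
    using assms(2) by (simp add: mult_left_mono)
qed

section \<open>The Riemann sphere\<close>

text \<open>The inverse of \<^const>\<open>stereo\<close> off the north pole, where the division by zero makes it 0.\<close>

definition from_sphere :: "complex \<times> real \<Rightarrow> complex" where
  "from_sphere x = fst x / complex_of_real (1 - snd x)"

lemma norm_power2_add_one_pos [simp]:
  "0 < (norm z)\<^sup>2 + 1" "0 < 1 + (norm z)\<^sup>2"
  by (simp_all add: add_nonneg_pos add_pos_nonneg)

lemma norm_power2_add_one_neq_0 [simp]:
  "(norm z)\<^sup>2 + 1 \<noteq> 0" "1 + (norm z)\<^sup>2 \<noteq> 0"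
  using norm_power2_add_one_pos[of z] by linarith+

lemma snd_stereo_less_1: "snd (stereo z) < 1"
  by (simp add: stereo_def divide_less_eq)

lemma stereo_neq_north_pole: "stereo z \<noteq> north_pole"
  using snd_stereo_less_1[of z] by (auto simp: north_pole_def)

lemma from_sphere_stereo [simp]: "from_sphere (stereo z) = z"
proof -
  define t where "t = 2 / (1 + (norm z)\<^sup>2)"
  have "1 - snd (stereo z) = t" "fst (stereo z) = complex_of_real t * z"
    by (simp_all add: t_def stereo_def field_simps)
  moreover have "complex_of_real t \<noteq> 0"
    unfolding of_real_eq_0_iff by (simp add: t_def)
  ultimately show ?thesis
    by (simp add: from_sphere_def)
qed

lemma continuous_on_stereo: "continuous_on UNIV stereo"
  unfolding stereo_def
  by (intro continuous_intros) (auto simp del: of_real_add)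

lemma dist_stereo_north_pole_ge: "2 / ((norm z)\<^sup>2 + 1) \<le> dist (stereo z) north_pole"
proof -
  have "dist (snd (stereo z)) (snd north_pole) = 2 / ((norm z)\<^sup>2 + 1)"
    by (simp add: stereo_def north_pole_def dist_real_def field_simps add.commute)
  then show ?thesis
    using dist_snd_le[of "stereo z" north_pole] by simp
qed

lemma isCont_from_sphere: "snd x \<noteq> 1 \<Longrightarrow> isCont from_sphere x"
  unfolding from_sphere_def by (intro continuous_intros) auto

lemma tendsto_extend_at_north_pole:
  fixes h :: "complex \<Rightarrow> complex"
  assumes lim: "(h \<longlongrightarrow> L) at_infinity"
  shows "((\<lambda>x. if x = north_pole then L else h (from_sphere x)) \<longlongrightarrow> L)
           (at north_pole within insert north_pole (stereo ` S))"
    (is "(?g \<longlongrightarrow> L) (at _ within insert _ ?T)")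
proof (rule tendstoI)
  fix e :: real assume "e > 0"
  then obtain M where M: "\<And>z. M \<le> norm z \<Longrightarrow> dist (h z) L < e"
    using lim by (auto simp: tendsto_iff eventually_at_infinity)
  have M_pos: "0 < M\<^sup>2 + 1"
    by (metis add_nonneg_pos zero_le_power2 zero_less_one)
  have close: "dist (h w) L < e" if "dist (stereo w) north_pole < 2 / (M\<^sup>2 + 1)" for w
  proof -
    have "2 / ((norm w)\<^sup>2 + 1) < 2 / (M\<^sup>2 + 1)"
      using that dist_stereo_north_pole_ge[of w] by linarith
    then have "M\<^sup>2 < (norm w)\<^sup>2"
      using M_pos by (simp add: field_simps)
    then have "M \<le> norm w"
      using power_less_imp_less_base[of M 2 "norm w"] by simp
    then show ?thesis
      using M by simp
  qed
  show "\<forall>\<^sub>F x in at north_pole within insert north_pole ?T. dist (?g x) L < e"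
    unfolding eventually_at
  proof (intro exI[of _ "2 / (M\<^sup>2 + 1)"] conjI ballI impI)
    fix x assume "x \<in> insert north_pole ?T" "x \<noteq> north_pole \<and> dist x north_pole < 2 / (M\<^sup>2 + 1)"
    then obtain w where "x = stereo w" "dist (stereo w) north_pole < 2 / (M\<^sup>2 + 1)"
      by auto
    then show "dist (?g x) L < e"
      using close stereo_neq_north_pole by simp
  qed (use M_pos in simp)
qed

lemma continuous_on_extend_to_north_pole:
  fixes h :: "complex \<Rightarrow> complex"
  assumes cont: "continuous_on S h" and lim: "(h \<longlongrightarrow> L) at_infinity"
  shows "continuous_on (insert north_pole (stereo ` S))
           (\<lambda>x. if x = north_pole then L else h (from_sphere x))"
    (is "continuous_on (insert _ ?T) ?g")
proof -
  have at_north_pole: "(?g \<longlongrightarrow> L) (at north_pole within insert north_pole ?T)"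
    using lim by (rule tendsto_extend_at_north_pole)
  have at_stereo: "continuous (at (stereo z) within insert north_pole ?T) ?g" if "z \<in> S" for z
  proof -
    have "from_sphere ` ?T = S"
      by (simp add: image_comp comp_def)
    then have "continuous (at (from_sphere (stereo z)) within from_sphere ` ?T) h"
      using cont that by (simp add: continuous_on_eq_continuous_within)
    moreover have "continuous (at (stereo z) within ?T) from_sphere"
      using snd_stereo_less_1[of z]
      by (intro continuous_at_imp_continuous_at_within[OF isCont_from_sphere]) simp
    ultimately have "continuous (at (stereo z) within ?T) (h \<circ> from_sphere)"
      by (intro continuous_within_compose)
    then have "continuous (at (stereo z) within ?T) ?g"
      by (rule continuous_transform_within[OF _ zero_less_one])
        (use that stereo_neq_north_pole[symmetric] in auto)
    moreover have "at (stereo z) within {north_pole} = bot"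
      using stereo_neq_north_pole[of z] by (simp add: at_within_eq_bot_iff)
    ultimately show ?thesis
      using at_within_union[of "stereo z" "{north_pole}" ?T] by (simp add: continuous_within)
  qed
  show ?thesis
    unfolding continuous_on_eq_continuous_within
  proof
    fix x assume "x \<in> insert north_pole ?T"
    then consider "x = north_pole" | z where "z \<in> S" "x = stereo z"
      by blast
    then show "continuous (at x within insert north_pole ?T) ?g"
      by cases (use at_north_pole at_stereo in \<open>auto simp: continuous_within\<close>)
  qed
qed

lemma tendsto_mobius_at_infinity:
  fixes p q :: complex
  shows "((\<lambda>z. (z - q) * (q - p) / (z - p)) \<longlongrightarrow> q - p) at_infinity"
proof -
  have "filterlim (\<lambda>z. z - p) at_infinity at_infinity"
    using tendsto_add_filterlim_at_infinity[OF tendsto_const[of "- p"] filterlim_ident] by simp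
  then have "((\<lambda>z. (q - p) + (q - p) * (p - q) / (z - p)) \<longlongrightarrow> (q - p) + 0) at_infinity"
    by (intro tendsto_add tendsto_const tendsto_divide_0[OF tendsto_const])
  moreover have "\<forall>\<^sub>F z in at_infinity. (q - p) + (q - p) * (p - q) / (z - p) = (z - q) * (q - p) / (z - p)"
    unfolding eventually_at_infinity
  proof (intro exI[of _ "norm p + 1"] allI impI)
    fix z :: complex assume "norm p + 1 \<le> norm z"
    then have "z - p \<noteq> 0" by auto
    then show "(q - p) + (q - p) * (p - q) / (z - p) = (z - q) * (q - p) / (z - p)"
      by (simp add: field_simps)
  qed
  ultimately show ?thesis
    by (simp add: tendsto_cong)
qed

lemma homotopic_loops_mobius_translation:
  fixes \<gamma> :: "real \<Rightarrow> complex"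
  assumes \<gamma>: "path \<gamma>" "pathfinish \<gamma> = pathstart \<gamma>" "path_image \<gamma> \<subseteq> K"
    and K: "convex K" "q \<in> K" "p \<notin> K" and "q \<notin> path_image \<gamma>"
  shows "homotopic_loops (- {0}) (\<lambda>t. (\<gamma> t - q) * (q - p) / (\<gamma> t - p)) (\<lambda>t. \<gamma> t - q)"
proof (rule homotopic_loops_linear)
  have \<gamma>_in_K: "\<gamma> t \<in> K" and \<gamma>_neq_q: "\<gamma> t \<noteq> q" if "t \<in> {0..1}" for t
    using \<gamma>(3) \<open>q \<notin> path_image \<gamma>\<close> that by (auto simp: path_image_def)
  then have \<gamma>_neq_p: "\<gamma> t \<noteq> p" if "t \<in> {0..1}" for t
    using K(3) that by blast
  then show "path (\<lambda>t. (\<gamma> t - q) * (q - p) / (\<gamma> t - p))"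
    using \<gamma>(1) unfolding path_def by (intro continuous_intros) auto
  show "path (\<lambda>t. \<gamma> t - q)"
    using \<gamma>(1) by (intro path_diff path_const)
  show "pathfinish (\<lambda>t. (\<gamma> t - q) * (q - p) / (\<gamma> t - p)) = pathstart (\<lambda>t. (\<gamma> t - q) * (q - p) / (\<gamma> t - p))"
    "pathfinish (\<lambda>t. \<gamma> t - q) = pathstart (\<lambda>t. \<gamma> t - q)"
    using \<gamma>(2) by (simp_all add: pathfinish_def pathstart_def)
  fix t :: real assume "t \<in> {0..1}"
  note \<gamma>_t = \<gamma>_in_K[OF this] \<gamma>_neq_p[OF this] \<gamma>_neq_q[OF this]
  show "closed_segment ((\<gamma> t - q) * (q - p) / (\<gamma> t - p)) (\<gamma> t - q) \<subseteq> - {0}"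
  proof
    fix y assume "y \<in> closed_segment ((\<gamma> t - q) * (q - p) / (\<gamma> t - p)) (\<gamma> t - q)"
    then obtain u :: real where u: "0 \<le> u" "u \<le> 1"
      and y: "y = (1 - u) *\<^sub>R ((\<gamma> t - q) * (q - p) / (\<gamma> t - p)) + u *\<^sub>R (\<gamma> t - q)"
      unfolding closed_segment_def by auto
    have "(1 - u) *\<^sub>R q + u *\<^sub>R \<gamma> t \<in> closed_segment q (\<gamma> t)"
      using u unfolding closed_segment_def by auto
    then have "(1 - u) *\<^sub>R q + u *\<^sub>R \<gamma> t \<noteq> p"
      using closed_segment_subset[OF K(2) \<gamma>_t(1) K(1)] K(3) by auto
    moreover have "y = (\<gamma> t - q) * ((1 - u) *\<^sub>R q + u *\<^sub>R \<gamma> t - p) / (\<gamma> t - p)"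
      using \<gamma>_t(2) unfolding y scaleR_conv_of_real by (simp add: field_simps)
    ultimately show "y \<in> - {0}"
      using \<gamma>_t(2,3) by simp
  qed
qed

lemma homotopic_loops_stereo_null:
  assumes "simply_connected (insert north_pole (stereo ` E))"
    and "path \<gamma>" "pathfinish \<gamma> = pathstart \<gamma>" "path_image \<gamma> \<subseteq> E"
  shows "homotopic_loops (insert north_pole (stereo ` E)) (stereo \<circ> \<gamma>) (linepath north_pole north_pole)"
proof -
  have "path (stereo \<circ> \<gamma>)"
    using assms(2) continuous_on_stereo by (intro path_continuous_image) (auto intro: continuous_on_subset)
  moreover have "pathfinish (stereo \<circ> \<gamma>) = pathstart (stereo \<circ> \<gamma>)"
    using assms(3) by (simp add: pathfinish_def pathstart_def)
  moreover have "path_image (stereo \<circ> \<gamma>) \<subseteq> insert north_pole (stereo ` E)"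
    using assms(4) by (auto simp: path_image_compose)
  ultimately show ?thesis
    using assms(1) unfolding simply_connected_eq_contractible_loop_any by blast
qed

lemma winding_number_zero_if_simply_connected_sphere:
  fixes E K :: "complex set" and \<gamma> :: "real \<Rightarrow> complex"
  assumes simply_connected: "simply_connected (insert north_pole (stereo ` E))"
    and \<gamma>: "path \<gamma>" "pathfinish \<gamma> = pathstart \<gamma>" "path_image \<gamma> \<subseteq> E \<inter> K"
    and K: "convex K" "q \<in> K" "p \<notin> K"
    and not_in_E: "q \<notin> E" "p \<notin> E"
  shows "winding_number \<gamma> q = 0"
proof -
  define \<Omega> where "\<Omega> = insert north_pole (stereo ` E)"
  define h where "h z = (z - q) * (q - p) / (z - p)" for z
  define g where "g x = (if x = north_pole then q - p else h (from_sphere x))" for x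
  have "p \<noteq> q"
    using K by auto
  have g_cont: "continuous_on \<Omega> g"
    unfolding \<Omega>_def g_def[abs_def]
  proof (rule continuous_on_extend_to_north_pole)
    show "continuous_on E h"
      unfolding h_def using not_in_E by (intro continuous_intros) auto
    show "(h \<longlongrightarrow> q - p) at_infinity"
      unfolding h_def by (rule tendsto_mobius_at_infinity)
  qed
  have g_nonzero: "g \<in> \<Omega> \<rightarrow> - {0}"
    using \<open>p \<noteq> q\<close> not_in_E stereo_neq_north_pole
    by (auto simp: \<Omega>_def g_def h_def)
  have "homotopic_loops \<Omega> (stereo \<circ> \<gamma>) (linepath north_pole north_pole)"
    unfolding \<Omega>_def using simply_connected \<gamma> by (intro homotopic_loops_stereo_null) auto
  from homotopic_loops_continuous_image[OF this g_cont g_nonzero]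
  have "homotopic_loops (- {0}) (\<lambda>t. h (\<gamma> t)) (linepath (q - p) (q - p))"
    by (simp add: g_def comp_def linepath_refl stereo_neq_north_pole)
  moreover have "homotopic_loops (- {0}) (\<lambda>t. h (\<gamma> t)) (\<lambda>t. \<gamma> t - q)"
    unfolding h_def using \<gamma> K not_in_E
    by (intro homotopic_loops_mobius_translation[of _ K]) auto
  ultimately have "homotopic_loops (- {0}) (\<lambda>t. \<gamma> t - q) (linepath (q - p) (q - p))"
    using homotopic_loops_sym homotopic_loops_trans by blast
  then have "winding_number (\<lambda>t. \<gamma> t - q) 0 = winding_number (linepath (q - p) (q - p)) 0"
    by (rule winding_number_homotopic_loops)
  then show ?thesis
    using \<open>p \<noteq> q\<close> by (simp add: winding_number_offset[of \<gamma> q])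
qed

section \<open>Perturbations of z^m + c\<close>

lemma power_diff_ge_diff:
  fixes x y :: real
  assumes "1 \<le> y" "y \<le> x" "1 \<le> n"
  shows "x - y \<le> x ^ n - y ^ n"
  using assms(3)
proof (induction n rule: dec_induct)
  case (step n)
  have "x - y \<le> x * (x ^ n - y ^ n)"
    using step assms mult_mono[of 1 x "x - y" "x ^ n - y ^ n"] by simp
  moreover have "x - y \<le> y ^ n * (x - y)"
    using assms one_le_power[of y n] mult_right_mono[of 1 "y ^ n" "x - y"] by simp
  moreover have "x ^ Suc n - y ^ Suc n = x * (x ^ n - y ^ n) + y ^ n * (x - y)"
    by (simp add: algebra_simps)
  ultimately show ?case
    using assms by linarith
qed simp

lemma monic_poly_minus_leading_and_constant:
  assumes "delta_condition m \<delta> a" "1 \<le> m"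
  shows "norm (monic_poly m a z - z ^ m - a 0) \<le> real (m - 1) * \<delta> * (1 + norm z ^ (m - 1))"
proof -
  obtain n where m: "m = Suc n"
    using assms(2) by (cases m) auto
  have "norm (a (Suc i) * z ^ Suc i) \<le> \<delta> * (1 + norm z ^ n)" if "i < n" for i
  proof -
    have "norm (a (Suc i)) < \<delta>"
      using assms(1) that m by (auto simp: delta_condition_def)
    moreover have "norm z ^ Suc i \<le> 1 + norm z ^ n"
    proof (cases "norm z \<le> 1")
      case True
      then show ?thesis
        using power_le_one[OF norm_ge_zero True, of "Suc i"] zero_le_power[OF norm_ge_zero, of z n]
        by linarith
    next
      case False
      then show ?thesis
        using that power_increasing[of "Suc i" n "norm z"] by simp
    qed
    ultimately show ?thesis
      unfolding norm_mult norm_power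
      by (intro mult_mono) (auto intro: order_trans[OF norm_ge_zero less_imp_le])
  qed
  then have "(\<Sum>i<n. norm (a (Suc i) * z ^ Suc i)) \<le> (\<Sum>i<n. \<delta> * (1 + norm z ^ n))"
    by (intro sum_mono) simp
  moreover have "monic_poly m a z - z ^ m - a 0 = (\<Sum>i<n. a (Suc i) * z ^ Suc i)"
    unfolding monic_poly_def m sum.lessThan_Suc_shift by simp
  ultimately show ?thesis
    using norm_sum[of "\<lambda>i. a (Suc i) * z ^ Suc i" "{..<n}"] by (simp add: m)
qed

locale perturbed_power_map =
  fixes m :: nat and f :: "complex \<Rightarrow> complex" and c :: complex and s e D :: real
  assumes m_ge_3: "3 \<le> m"
    and continuous_f: "continuous_on UNIV f"
    and close_to_power: "\<And>z. norm (f z - z ^ m - c) \<le> D * (1 + norm z ^ (m - 1))"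
    and s: "1 \<le> s" "s ^ (m - 1) = 2"
    and e: "0 < e" "e \<le> 1"
    and c_large: "s + e \<le> norm c"
    and D: "0 \<le> D" "D * (1 + 4 ^ (m - 1)) \<le> e / 24"
begin

lemma D_le: "D \<le> e / 48"
proof -
  have "D * 2 \<le> D * (1 + 4 ^ (m - 1))"
    using D(1) one_le_power[of "4::real" "m - 1"] by (intro mult_left_mono) auto
  then show ?thesis
    using D(2) by linarith
qed

lemma one_le_norm_c: "1 \<le> norm c"
  using s(1) e(1) c_large by linarith

lemma c_nonzero: "c \<noteq> 0"
  using one_le_norm_c by auto

lemma pi_div_m_bounds: "0 < pi / m" "pi / m \<le> pi / 3"
proof -
  show "0 < pi / m"
    using m_ge_3 by simp
  show "pi / m \<le> pi / 3"
    by (rule divide_left_mono) (use m_ge_3 in auto)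
qed

lemma power_m: "x ^ m = x * x ^ (m - 1)"
  using m_ge_3 by (simp flip: power_Suc)

lemma two_add_le_power:
  assumes "s + t \<le> r" "0 \<le> t"
  shows "2 + t \<le> r ^ (m - 1)"
proof -
  have "r - s \<le> r ^ (m - 1) - s ^ (m - 1)"
    using assms s(1) m_ge_3 by (intro power_diff_ge_diff) auto
  then show ?thesis
    using assms s(2) by linarith
qed

lemma norm_f_ge: "norm (z ^ m + c) - D * (1 + norm z ^ (m - 1)) \<le> norm (f z)"
  using norm_triangle_ineq4[of "f z" "f z - z ^ m - c"] close_to_power[of z] by simp

lemma norm_f_expanding:
  assumes "norm c - e / 8 \<le> norm z"
  shows "(1 + e / 8) * norm z \<le> norm (f z)"
proof -
  define r where "r = norm z"
  define X where "X = r ^ (m - 1)"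
  have "1 \<le> r"
    using assms one_le_norm_c c_large s(1) e by (simp add: r_def)
  have X: "2 + e / 2 \<le> X"
    unfolding X_def using assms c_large e by (intro two_add_le_power) (auto simp: r_def)
  have "X * r - norm c - D - D * X \<le> norm (f z)"
    using norm_f_ge[of z] norm_triangle_ineq2[of "z ^ m" "- c"]
    by (simp add: r_def X_def norm_mult norm_power power_m algebra_simps)
  moreover have "D \<le> D * X"
    using X D(1) e(1) mult_left_mono[of 1 X D] by simp
  moreover have "(2 + e / 2) * (r - 2 * D) \<le> X * (r - 2 * D)"
    using X \<open>1 \<le> r\<close> D_le e by (intro mult_right_mono) auto
  then have "2 * r + e * r / 2 - 4 * D - e * D \<le> X * r - 2 * (D * X)"
    by (simp add: algebra_simps)
  moreover have "e * D \<le> D" "e \<le> e * r"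
    using e D(1) \<open>1 \<le> r\<close> by (simp_all add: mult_left_le_one_le)
  ultimately have "r + e * r / 8 \<le> norm (f z)"
    using assms D_le e(1) unfolding r_def[symmetric] by linarith
  then show ?thesis
    by (simp add: r_def algebra_simps)
qed

lemma escaping_if_norm_ge:
  assumes "norm c - e / 8 \<le> norm z"
  shows "z \<in> escaping_set f"
proof (rule escaping_set_if_expanding[of "1 + e / 8" "norm c - e / 8"])
  show "1 < 1 + e / 8" "0 < norm c - e / 8"
    using e one_le_norm_c by auto
qed (use assms norm_f_expanding in auto)

lemma perturbation_le_power:
  assumes "0 \<le> r"
  shows "D * (1 + r ^ (m - 1)) \<le> r ^ m + e / 24"
proof -
  have r_power: "r ^ (m - 1) \<le> 1 + r ^ m"
  proof (cases "r \<le> 1")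
    case True
    then show ?thesis
      using assms power_le_one[of r "m - 1"] zero_le_power[of r m] by linarith
  next
    case False
    then have "r ^ (m - 1) \<le> r ^ m"
      by (intro power_increasing) auto
    then show ?thesis
      by simp
  qed
  then have "D * (1 + r ^ (m - 1)) \<le> 2 * D + D * r ^ m"
    using mult_left_mono[OF r_power D(1)] by (simp add: algebra_simps)
  also have "\<dots> \<le> r ^ m + e / 24"
    using D_le e assms mult_right_mono[of D 1 "r ^ m"] by simp
  finally show ?thesis .
qed

lemma escaping_if_power_on_ray:
  assumes "z ^ m = complex_of_real t * c" "0 \<le> t"
  shows "z \<in> escaping_set f"
proof -
  have "z ^ m + c = complex_of_real (t + 1) * c"
    using assms(1) by (simp add: algebra_simps)
  then have "norm (z ^ m + c) = (t + 1) * norm c"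
    using assms(2) by (simp add: norm_mult)
  moreover have "norm z ^ m = t * norm c"
    using assms by (simp add: norm_mult flip: norm_power)
  ultimately have "norm (z ^ m + c) = norm z ^ m + norm c"
    by (simp add: algebra_simps)
  then have "norm c - e / 24 \<le> norm (f z)"
    using norm_f_ge[of z] perturbation_le_power[of "norm z"] by simp
  then have "f z \<in> escaping_set f"
    using e(1) by (intro escaping_if_norm_ge) simp
  then show ?thesis
    by (rule escaping_set_preimage)
qed

text \<open>On the disc of an admissible radius \<open>\<rho>\<close>, the map \<open>z \<mapsto> z - (f z - z^m - c)\<close> stays inside the
  disc of radius \<open>norm c\<close> and \<open>norm (z + z^m - f z) \<le> \<rho>^m\<close>.\<close>

definition admissible_radius :: "real \<Rightarrow> bool" where
  "admissible_radius \<rho> \<longleftrightarrow>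
     0 < \<rho> \<and> \<rho> + D * (1 + \<rho> ^ (m - 1)) < norm c \<and> norm c + \<rho> + D * (1 + \<rho> ^ (m - 1)) \<le> \<rho> ^ m"

lemma admissible_radius_if_norm_c_le_4:
  assumes "norm c \<le> 4"
  shows "admissible_radius (norm c - e / 4)"
proof -
  define \<rho> where "\<rho> = norm c - e / 4"
  have "s + 3 * e / 4 \<le> \<rho>"
    using c_large by (simp add: \<rho>_def)
  then have "1 \<le> \<rho>"
    using s(1) e(1) by linarith
  have X: "2 + 3 * e / 4 \<le> \<rho> ^ (m - 1)"
    by (rule two_add_le_power) (use \<open>s + 3 * e / 4 \<le> \<rho>\<close> e(1) in auto)
  have "\<rho> ^ (m - 1) \<le> 4 ^ (m - 1)"
    using \<open>1 \<le> \<rho>\<close> assms e(1) by (intro power_mono) (auto simp: \<rho>_def)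
  then have "D * (1 + \<rho> ^ (m - 1)) \<le> D * (1 + 4 ^ (m - 1))"
    using D(1) by (intro mult_left_mono) auto
  then have small: "D * (1 + \<rho> ^ (m - 1)) \<le> e / 24"
    using D(2) by linarith
  have "\<rho> * (2 + 3 * e / 4) \<le> \<rho> * \<rho> ^ (m - 1)"
    using X \<open>1 \<le> \<rho>\<close> by (intro mult_left_mono) auto
  moreover have "1 * (3 * e / 4) \<le> \<rho> * (3 * e / 4)"
    using \<open>1 \<le> \<rho>\<close> e(1) by (intro mult_right_mono) auto
  ultimately have "2 * \<rho> + 3 * e / 4 \<le> \<rho> ^ m"
    unfolding power_m[of \<rho>] by (simp add: algebra_simps)
  moreover have "norm c = \<rho> + e / 4"
    by (simp add: \<rho>_def)
  ultimately show ?thesis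
    using small e(1) \<open>1 \<le> \<rho>\<close> unfolding admissible_radius_def \<rho>_def[symmetric] by (intro conjI) linarith+
qed

text \<open>For large \<open>norm c\<close> a radius close to \<open>norm c\<close> would make the perturbation term too big.\<close>

lemma admissible_radius_if_norm_c_gt_4:
  assumes "4 < norm c"
  shows "admissible_radius (root (m - 1) (2 * norm c))"
proof -
  define \<rho> where "\<rho> = root (m - 1) (2 * norm c)"
  have X: "\<rho> ^ (m - 1) = 2 * norm c"
    using m_ge_3 by (simp add: \<rho>_def)
  have "1 \<le> \<rho>"
    using m_ge_3 one_le_norm_c by (simp add: \<rho>_def)
  have "\<rho> \<le> norm c / 2 + 1"
  proof (rule ccontr)
    assume "\<not> \<rho> \<le> norm c / 2 + 1"
    then have "(norm c / 2 + 1) ^ 2 < \<rho> ^ 2"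
      using one_le_norm_c by (intro power_strict_mono) auto
    moreover have "\<rho> ^ 2 \<le> \<rho> ^ (m - 1)"
      using \<open>1 \<le> \<rho>\<close> m_ge_3 by (intro power_increasing) auto
    moreover have "(norm c / 2 + 1) ^ 2 = 2 * norm c + (norm c / 2 - 1) ^ 2"
      by (simp add: power2_eq_square algebra_simps)
    ultimately show False
      using X by (smt (verit) zero_le_power2)
  qed
  have "48 * D * (1 + 2 * norm c) \<le> 1 * (1 + 2 * norm c)"
    using D_le e(2) by (intro mult_right_mono) auto
  then have small: "48 * (D * (1 + \<rho> ^ (m - 1))) \<le> 1 + 2 * norm c"
    unfolding X by (simp add: algebra_simps)
  have "1 * (2 * norm c - 1) \<le> \<rho> * (2 * norm c - 1)"
    using \<open>1 \<le> \<rho>\<close> one_le_norm_c by (intro mult_right_mono) auto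
  then have "\<rho> + 2 * norm c - 1 \<le> \<rho> ^ m"
    unfolding power_m[of \<rho>] X by (simp add: algebra_simps)
  then have "norm c + \<rho> + D * (1 + \<rho> ^ (m - 1)) \<le> \<rho> ^ m"
    using small assms by linarith
  moreover have "\<rho> + D * (1 + \<rho> ^ (m - 1)) < norm c"
    using small assms \<open>\<rho> \<le> norm c / 2 + 1\<close> by linarith
  ultimately show ?thesis
    using \<open>1 \<le> \<rho>\<close> unfolding admissible_radius_def \<rho>_def[symmetric] by auto
qed

lemma exists_admissible_radius: "\<exists>\<rho>. admissible_radius \<rho>"
  using admissible_radius_if_norm_c_le_4 admissible_radius_if_norm_c_gt_4 by force

lemma norm_eq_1_if_power_eq_minus_sgn:
  assumes "\<beta> ^ m = - sgn c"
  shows "norm \<beta> = 1"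
proof -
  have "norm \<beta> ^ m = 1"
    using assms c_nonzero by (simp add: norm_sgn flip: norm_power)
  then show ?thesis
    using m_ge_3 power_eq_1_iff[of "norm \<beta>" m] by fastforce
qed

lemma root_equation_bounds:
  assumes \<beta>: "\<beta> ^ m = - sgn c" and "admissible_radius \<rho>" and "norm z \<le> \<rho>"
  shows "0 < Re ((z + z ^ m - f z) / \<beta> ^ m)" "norm ((z + z ^ m - f z) / \<beta> ^ m) \<le> \<rho> ^ m"
proof -
  have \<rho>: "\<rho> + D * (1 + \<rho> ^ (m - 1)) < norm c" "norm c + \<rho> + D * (1 + \<rho> ^ (m - 1)) \<le> \<rho> ^ m"
    using assms(2) by (simp_all add: admissible_radius_def)
  define Q where "Q = f z - z ^ m - c"
  have "norm z ^ (m - 1) \<le> \<rho> ^ (m - 1)"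
    using assms(3) by (intro power_mono) auto
  then have "D * (1 + norm z ^ (m - 1)) \<le> D * (1 + \<rho> ^ (m - 1))"
    using D(1) by (intro mult_left_mono) auto
  then have Q_le: "norm Q \<le> D * (1 + \<rho> ^ (m - 1))"
    using close_to_power[of z] unfolding Q_def by linarith
  have "c / sgn c = norm c"
    using c_nonzero by (simp add: sgn_div_norm scaleR_conv_of_real field_simps)
  then have "(z + z ^ m - f z) / \<beta> ^ m = norm c - (z - Q) / sgn c"
    using \<beta> c_nonzero by (simp add: Q_def diff_divide_distrib[symmetric] field_simps)
  moreover have "norm (z - Q) < norm c"
    using Q_le assms(3) \<rho>(1) norm_triangle_ineq4[of z Q] by linarith
  moreover have "Re ((z - Q) / sgn c) \<le> norm (z - Q)"
    using complex_Re_le_cmod[of "(z - Q) / sgn c"] c_nonzero by (simp add: norm_divide norm_sgn)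
  ultimately show "0 < Re ((z + z ^ m - f z) / \<beta> ^ m)"
    by simp
  have "norm ((z + z ^ m - f z) / \<beta> ^ m) = norm (z - c - Q)"
    using norm_eq_1_if_power_eq_minus_sgn[OF \<beta>]
    by (simp add: Q_def norm_divide norm_power algebra_simps)
  also have "\<dots> \<le> norm z + norm c + norm Q"
    using norm_triangle_ineq4[of "z - c" Q] norm_triangle_ineq4[of z c] by linarith
  also have "\<dots> \<le> \<rho> ^ m"
    using Q_le assms(3) \<rho>(2) by linarith
  finally show "norm ((z + z ^ m - f z) / \<beta> ^ m) \<le> \<rho> ^ m" .
qed

text \<open>A fixed point solves \<open>q^m = q + q^m - f q\<close>; on the disc of radius \<open>\<rho>\<close> the right-hand side is
  close to \<open>- c = \<beta>^m * norm c\<close>, so \<open>q\<close> can be sought on the branch of the \<open>m\<close>-th root near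
  \<open>\<beta>\<close>.\<close>

lemma exists_fixed_point_near_root:
  assumes \<beta>: "\<beta> ^ m = - sgn c"
  shows "\<exists>l \<phi>. 0 < l \<and> l < norm c \<and> \<bar>\<phi>\<bar> < pi / (2 * m) \<and> f (\<beta> * rcis l \<phi>) = \<beta> * rcis l \<phi>"
proof -
  obtain \<rho> where "admissible_radius \<rho>"
    using exists_admissible_radius by blast
  then have \<rho>: "0 < \<rho>" "\<rho> + D * (1 + \<rho> ^ (m - 1)) < norm c"
    by (simp_all add: admissible_radius_def)
  have "norm \<beta> = 1"
    using \<beta> by (rule norm_eq_1_if_power_eq_minus_sgn)
  define v where "v z = (z + z ^ m - f z) / \<beta> ^ m" for z
  have "continuous_on (cball 0 \<rho>) v"
    unfolding v_def using \<open>norm \<beta> = 1\<close>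
    by (intro continuous_intros continuous_on_subset[OF continuous_f]) auto
  then obtain q l \<phi> where q: "norm q \<le> \<rho>" "q ^ m = \<beta> ^ m * v q" "0 < l"
    "\<bar>\<phi>\<bar> < pi / (2 * m)" "q = \<beta> * rcis l \<phi>"
    using brouwer_power_equation_in_sector[of \<rho> m \<beta> v] root_equation_bounds[OF \<beta> \<open>admissible_radius \<rho>\<close>]
      \<rho>(1) m_ge_3 \<open>norm \<beta> = 1\<close>
    unfolding v_def by auto
  have "\<beta> \<noteq> 0"
    using \<open>norm \<beta> = 1\<close> by auto
  then have "f q = q"
    using q(2) by (simp add: v_def)
  have "l = norm q"
    using q(3,5) \<open>norm \<beta> = 1\<close> by (simp add: norm_mult rcis_def)
  moreover have "0 \<le> D * (1 + \<rho> ^ (m - 1))"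
    using D(1) \<rho>(1) by simp
  ultimately have "l < norm c"
    using q(1) \<rho>(2) by linarith
  then show ?thesis
    using \<open>f q = q\<close> q by blast
qed

lemma escaping_on_radial_edge:
  assumes "\<beta> ^ m = - sgn c" "cis \<theta> ^ m = - 1" "0 \<le> R"
    and "z \<in> closed_segment 0 (\<beta> * rcis R \<theta>)"
  shows "z \<in> escaping_set f"
proof -
  obtain t where "0 \<le> t" "z ^ m = complex_of_real t * (\<beta> * rcis R \<theta>) ^ m"
    using power_in_closed_segment_0[OF assms(4)] by blast
  moreover have "(\<beta> * rcis R \<theta>) ^ m = complex_of_real (R ^ m / norm c) * c"
    using assms(1-3) by (simp add: rcis_def power_mult_distrib sgn_div_norm scaleR_conv_of_real field_simps)
  ultimately have "z ^ m = complex_of_real (t * (R ^ m / norm c)) * c"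
    by simp
  then show ?thesis
    using \<open>0 \<le> t\<close> \<open>0 \<le> R\<close> escaping_if_power_on_ray[of z "t * (R ^ m / norm c)"] by simp
qed

lemma escaping_on_far_edge:
  assumes "norm \<beta> = 1" "0 \<le> R" "norm c \<le> R * cos \<theta>"
    and "z \<in> closed_segment (\<beta> * rcis R (- \<theta>)) (\<beta> * rcis R \<theta>)"
  shows "z \<in> escaping_set f"
  using norm_ge_on_chord[OF assms(1,2,4)] assms(3) e(1) by (intro escaping_if_norm_ge) simp

lemma triangle_boundary_escaping:
  assumes "\<beta> ^ m = - sgn c" "\<theta> = pi / m" "0 < R" "R * cos \<theta> = norm c"
  shows "path_image (linepath 0 (\<beta> * rcis R (- \<theta>)) +++ linepath (\<beta> * rcis R (- \<theta>)) (\<beta> * rcis R \<theta>)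
           +++ linepath (\<beta> * rcis R \<theta>) 0) \<subseteq> escaping_set f"
proof -
  have "cis \<theta> ^ m = - 1" "cis (- \<theta>) ^ m = - 1"
    using assms(2) m_ge_3 by (simp_all add: Complex.DeMoivre complex_eq_iff)
  then have "closed_segment 0 (\<beta> * rcis R (- \<theta>)) \<subseteq> escaping_set f"
    "closed_segment (\<beta> * rcis R \<theta>) 0 \<subseteq> escaping_set f"
    using escaping_on_radial_edge[OF assms(1), of _ R] \<open>0 < R\<close>
    by (auto simp: closed_segment_commute[of _ 0])
  moreover have "closed_segment (\<beta> * rcis R (- \<theta>)) (\<beta> * rcis R \<theta>) \<subseteq> escaping_set f"
    using escaping_on_far_edge[OF norm_eq_1_if_power_eq_minus_sgn[OF assms(1)], of R \<theta>] assms(3,4)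
    by auto
  ultimately show ?thesis
    by (simp add: path_image_join)
qed

lemma fixed_points_separated_by_triangle:
  assumes \<beta>: "\<beta> ^ m = - sgn c" and \<theta>: "\<theta> = pi / m" and R: "R * cos \<theta> = norm c"
  obtains q p where "f q = q" "f p = p"
    "q \<in> interior (convex hull {0, \<beta> * rcis R (- \<theta>), \<beta> * rcis R \<theta>})"
    "p \<notin> convex hull {0, \<beta> * rcis R (- \<theta>), \<beta> * rcis R \<theta>}"
proof -
  have "0 < \<theta>" "\<theta> \<le> pi / 3" and half_\<theta>: "pi / (2 * m) = \<theta> / 2"
    unfolding \<theta> using pi_div_m_bounds by simp_all
  have "norm \<beta> = 1"
    using \<beta> by (rule norm_eq_1_if_power_eq_minus_sgn)
  have "0 < cos \<theta>"
    using \<open>0 < \<theta>\<close> \<open>\<theta> \<le> pi / 3\<close> by (intro cos_gt_zero_pi) auto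
  then have "0 < R"
    using R one_le_norm_c by (smt (verit) mult_nonpos_nonneg)
  obtain l \<phi> where q: "0 < l" "l < norm c" "\<bar>\<phi>\<bar> < \<theta> / 2"
    "f (\<beta> * rcis l \<phi>) = \<beta> * rcis l \<phi>"
    using exists_fixed_point_near_root[OF \<beta>] unfolding half_\<theta> by blast
  have rotate: "\<beta> * cis (2 * \<theta>) * rcis r a = \<beta> * rcis r (2 * \<theta> + a)" for r a
    by (simp add: rcis_def algebra_simps flip: cis_mult)
  have "(\<beta> * cis (2 * \<theta>)) ^ m = - sgn c"
    using \<beta> m_ge_3 by (simp add: \<theta> power_mult_distrib Complex.DeMoivre)
  from exists_fixed_point_near_root[OF this]
  obtain l' \<phi>' where p: "0 < l'" "\<bar>\<phi>'\<bar> < \<theta> / 2"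
    "f (\<beta> * rcis l' (2 * \<theta> + \<phi>')) = \<beta> * rcis l' (2 * \<theta> + \<phi>')"
    unfolding half_\<theta> rotate by blast
  have "l * cos \<phi> \<le> l"
    using \<open>0 < l\<close> by (simp add: mult_left_le)
  then have below_chord: "l * cos \<phi> < R * cos \<theta>"
    using q(2) R by linarith
  have "\<beta> * rcis l \<phi> \<in> interior (convex hull {0, \<beta> * rcis R (- \<theta>), \<beta> * rcis R \<theta>})"
    by (rule rcis_in_interior_triangle[OF _ _ \<open>norm \<beta> = 1\<close> q(1) _ below_chord])
      (use \<open>0 < \<theta>\<close> \<open>\<theta> \<le> pi / 3\<close> q(3) in auto)
  moreover have "\<beta> * rcis l' (2 * \<theta> + \<phi>') \<notin> convex hull {0, \<beta> * rcis R (- \<theta>), \<beta> * rcis R \<theta>}"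
    using \<open>0 < \<theta>\<close> \<open>\<theta> \<le> pi / 3\<close> \<open>norm \<beta> = 1\<close> p(1,2) \<open>0 < R\<close>
    by (intro rcis_not_in_triangle) auto
  ultimately show ?thesis
    using that q(4) p(3) by blast
qed

lemma not_simply_connected_Omega: "\<not> simply_connected (Omega f)"
proof
  assume simply_connected: "simply_connected (Omega f)"
  define \<theta> where "\<theta> = pi / m"
  define \<beta> where "\<beta> = cis ((Arg c + pi) / m)"
  define R where "R = norm c / cos \<theta>"
  have \<beta>: "\<beta> ^ m = - sgn c"
    using m_ge_3 c_nonzero by (simp add: \<beta>_def Complex.DeMoivre cis_Arg flip: cis_mult)
  have "0 < cos \<theta>"
    using pi_div_m_bounds pi_gt_zero unfolding \<theta>_def by (intro cos_gt_zero_pi) linarith+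
  then have "0 < R" "R * cos \<theta> = norm c"
    using c_nonzero by (simp_all add: R_def)
  define A B where "A = \<beta> * rcis R (- \<theta>)" and "B = \<beta> * rcis R \<theta>"
  define \<gamma> where "\<gamma> = linepath 0 A +++ linepath A B +++ linepath B 0"
  obtain q p where "f q = q" "f p = p" and q: "q \<in> interior (convex hull {0, A, B})"
    and p: "p \<notin> convex hull {0, A, B}"
    using fixed_points_separated_by_triangle[OF \<beta> \<theta>_def \<open>R * cos \<theta> = norm c\<close>]
    unfolding A_def B_def by blast
  have "path_image \<gamma> \<subseteq> escaping_set f"
    unfolding \<gamma>_def A_def B_def
    using triangle_boundary_escaping[OF \<beta> \<theta>_def \<open>0 < R\<close> \<open>R * cos \<theta> = norm c\<close>] .
  moreover have "path_image \<gamma> \<subseteq> convex hull {0, A, B}"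
    unfolding \<gamma>_def by (simp add: path_image_join closed_segment_subset_convex_hull hull_inc)
  ultimately have "winding_number \<gamma> q = 0"
    using simply_connected \<open>f q = q\<close> \<open>f p = p\<close> q p interior_subset
    by (intro winding_number_zero_if_simply_connected_sphere[of "escaping_set f" _ "convex hull {0, A, B}" _ p])
      (auto simp: Omega_def \<gamma>_def fixed_point_not_in_escaping_set)
  moreover have "winding_number \<gamma> q \<in> {1, -1}"
    using winding_number_triangle[OF q] by (simp add: \<gamma>_def)
  ultimately show False
    by simp
qed

end

lemma perturbed_power_map_monic_poly:
  assumes "3 \<le> m" "delta_condition m (D / real (m - 1)) a"
    and "0 < e" "e \<le> 1" "root (m - 1) 2 + e \<le> norm (a 0)"
    and "0 \<le> D" "D * (1 + 4 ^ (m - 1)) \<le> e / 24"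
  shows "perturbed_power_map m (monic_poly m a) (a 0) (root (m - 1) 2) e D"
proof -
  have "norm (monic_poly m a z - z ^ m - a 0) \<le> D * (1 + norm z ^ (m - 1))" for z
    using monic_poly_minus_leading_and_constant[OF assms(2)] assms(1) by simp
  then show ?thesis
    using assms by unfold_locales (auto simp: monic_poly_def intro!: continuous_intros)
qed

theorem mainTheorem11:
  fixes m :: nat and \<epsilon> :: real
  assumes "m \<ge> 3" and "\<epsilon> > 0"
  shows "\<exists>\<delta>>0. \<forall>a :: nat \<Rightarrow> complex.
           delta_condition m \<delta> a \<and> simply_connected (Omega (monic_poly m a))
           \<longrightarrow> norm (a 0) < 2 powr (1 / real (m - 1)) + \<epsilon>"
proof -
  define e where "e = min \<epsilon> 1"
  define X :: real where "X = 1 + 4 ^ (m - 1)"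
  define D where "D = e / (24 * X)"
  have "0 < e" "e \<le> 1" "e \<le> \<epsilon>"
    using assms(2) by (auto simp: e_def)
  moreover have "0 < X"
    by (simp add: X_def add_pos_pos)
  ultimately have "0 < D" "D * (1 + 4 ^ (m - 1)) = e / 24"
    unfolding X_def[symmetric] by (simp_all add: D_def)
  show ?thesis
  proof (intro exI[of _ "D / real (m - 1)"] conjI allI impI)
    show "0 < D / real (m - 1)"
      using \<open>0 < D\<close> assms(1) by simp
    fix a :: "nat \<Rightarrow> complex"
    assume a: "delta_condition m (D / real (m - 1)) a \<and> simply_connected (Omega (monic_poly m a))"
    have "\<not> perturbed_power_map m (monic_poly m a) (a 0) (root (m - 1) 2) e D"
      using a perturbed_power_map.not_simply_connected_Omega by blast
    then have "norm (a 0) < root (m - 1) 2 + e"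
      using perturbed_power_map_monic_poly[OF assms(1)] a \<open>0 < e\<close> \<open>e \<le> 1\<close> \<open>0 < D\<close>
        \<open>D * (1 + 4 ^ (m - 1)) = e / 24\<close> by fastforce
    then show "norm (a 0) < 2 powr (1 / real (m - 1)) + \<epsilon>"
      using assms(1) \<open>e \<le> \<epsilon>\<close> by (simp add: root_powr_inverse)
  qed
qed

end
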